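(* Let $p(x)$, $q(x)$, $r(x)$ be probability mass functions on the same finite support set $\mathcal{X}$. Let $c_1=\min_{x\in\mathcal{X}}\frac{p(x)(1-p(x))}{3(1+p(x))^2}$ and $p_m=\min_{x}p(x)$, and assume $c_1>0$ and $p_m>0$. Suppose $D_{\mathsf{KL}}(p\|q)\le\tau\le c_1$ and that for all $x\in\mathcal{X}$, $\gamma_1\le \frac{p(x)}{r(x)}\le\gamma_2$. Then for all $x\in\mathcal{X}$, with $g(\tau,p_m)=\sqrt{3\tau/p_m}$, \[ \gamma_1\exp\big(-g(\tau,p_m)\big)\le\frac{q(x)}{r(x)}\le\gamma_2\exp\big(g(\tau,p_m)\big). \]
   Context: $D_{\mathsf{KL}}(p\|q)=\sum_x p(x)\log\frac{p(x)}{q(x)}$ is the Kullback–Leibler divergence. *)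

theory Defs
  imports Complex_Main
begin

definition is_pmf_on :: "'a set \<Rightarrow> ('a \<Rightarrow> real) \<Rightarrow> bool" where
  "is_pmf_on X p \<longleftrightarrow> finite X \<and> (\<forall>x\<in>X. p x > 0) \<and> (\<Sum>x\<in>X. p x) = 1"

definition KL :: "'a set \<Rightarrow> ('a \<Rightarrow> real) \<Rightarrow> ('a \<Rightarrow> real) \<Rightarrow> real" where
  "KL X p q = (\<Sum>x\<in>X. p x * ln (p x / q x))"

end

theory Submission
  imports Defs
begin

text \<open>Fix \<open>x\<close> and put \<open>a = p x\<close>, \<open>b = q x\<close>. By the log-sum inequality, merging the
  other points of \<open>X\<close> can only decrease the divergence, so the binary divergence of
  \<open>(a, 1 - a)\<close> from \<open>(b, 1 - b)\<close> is at most \<open>\<tau>\<close>. Writing \<open>b = a e\<^sup>t\<close>, comparison of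
  derivatives in \<open>t\<close> shows that this binary divergence is at least \<open>a min(t\<^sup>2, 1) / 3\<close>.
  Since \<open>\<tau> \<le> c\<^sub>1 < a / 3\<close>, the minimum must be \<open>t\<^sup>2\<close>, whence
  \<open>|ln (q x / p x)| \<le> sqrt (3 \<tau> / a) \<le> sqrt (3 \<tau> / p\<^sub>m)\<close>; multiplying by the bounds on
  \<open>p x / r x\<close> gives the claim.\<close>

lemma exp_neg_ge_Taylor_cubic:
  fixes v :: real assumes "0 \<le> v"
  shows "1 - v + v^2/2 - v^3/6 \<le> exp (-v)"
proof (cases "v = 0")
  case False
  then obtain t where "t < 0"
    and exp_eq: "exp (-v) = (\<Sum>m<3. 1 / fact m * (-v) ^ m) + exp t / fact 3 * (-v) ^ 3"
    using Maclaurin_minus[of "-v" 3 "\<lambda>_. exp" exp] assms by auto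
  have "exp t * v^3 \<le> v^3" using \<open>t < 0\<close> assms by (simp add: mult_left_le_one_le)
  then show ?thesis unfolding exp_eq by (simp add: eval_nat_numeral fact_numeral)
qed simp

lemma min_sq_one_le_exp_excess:
  fixes v :: real assumes "0 \<le> v"
  shows "min (v^2) 1 / 3 \<le> v - 1 + exp (-v)"
proof -
  have cubic: "v^2/2 - v^3/6 \<le> v - 1 + exp (-v)"
    using exp_neg_ge_Taylor_cubic[OF assms] by simp
  consider "v \<le> 1" | "1 < v" "v \<le> 2" | "2 < v" by linarith
  then show ?thesis
  proof cases
    case 1
    then have "v^3 \<le> v^2"
      using assms mult_left_le[of v "v^2"] by (simp add: power3_eq_cube power2_eq_square ac_simps)
    then have "v^2/3 \<le> v^2/2 - v^3/6" by simp
    then show ?thesis using cubic by linarith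
  next
    case 2
    then have "0 \<le> (v - 1) * (2 + v * (2 - v))" by simp
    then have "1/3 \<le> v^2/2 - v^3/6" by (simp add: power2_eq_square power3_eq_cube algebra_simps)
    then show ?thesis using cubic by linarith
  next
    case 3
    then show ?thesis using exp_gt_zero[of "-v"] by linarith
  qed
qed

lemma deriv_le_imp_le_from_zero:
  fixes f g f' g' :: "real \<Rightarrow> real"
  assumes "0 \<le> v" "f 0 \<le> g 0"
    and "\<And>y. 0 \<le> y \<Longrightarrow> y \<le> v \<Longrightarrow> (f has_real_derivative f' y) (at y)"
    and "\<And>y. 0 \<le> y \<Longrightarrow> y \<le> v \<Longrightarrow> (g has_real_derivative g' y) (at y)"
    and "\<And>y. 0 \<le> y \<Longrightarrow> y \<le> v \<Longrightarrow> f' y \<le> g' y"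
  shows "f v \<le> g v"
proof -
  have "g 0 - f 0 \<le> g v - f v"
  proof (rule DERIV_nonneg_imp_nondecreasing[OF assms(1)])
    fix y assume "0 \<le> y" "y \<le> v"
    then show "\<exists>D. ((\<lambda>y. g y - f y) has_real_derivative D) (at y) \<and> 0 \<le> D"
      using assms(3-5) by (intro exI[of _ "g' y - f' y"]) (auto intro: DERIV_diff)
  qed
  with assms(2) show ?thesis by simp
qed

lemma ratio_bounds_from_abs_ln:
  fixes a b r g \<gamma>\<^sub>1 \<gamma>\<^sub>2 :: real
  assumes "0 < a" "0 < b" "0 < r" and "\<bar>ln (b / a)\<bar> \<le> g"
    and "\<gamma>\<^sub>1 \<le> a / r" "a / r \<le> \<gamma>\<^sub>2"
  shows "\<gamma>\<^sub>1 * exp (- g) \<le> b / r \<and> b / r \<le> \<gamma>\<^sub>2 * exp g"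
proof -
  have "exp (- g) \<le> exp (ln (b / a))" "exp (ln (b / a)) \<le> exp g"
    using assms(4) by (simp_all only: exp_le_cancel_iff)
  then have "exp (- g) \<le> b / a" "b / a \<le> exp g" using assms(1,2) by simp_all
  moreover have "b / r = a / r * (b / a)" and "0 < a / r" using assms(1,3) by simp_all
  ultimately show ?thesis
    using assms(5,6) by (smt (verit) exp_gt_zero mult_left_mono mult_right_mono)
qed

lemma log_sum_inequality:
  fixes p q :: "'a \<Rightarrow> real"
  assumes "finite Y" "\<forall>y\<in>Y. 0 < p y" "\<forall>y\<in>Y. 0 < q y"
  shows "(\<Sum>y\<in>Y. p y) * ln ((\<Sum>y\<in>Y. p y) / (\<Sum>y\<in>Y. q y)) \<le> (\<Sum>y\<in>Y. p y * ln (p y / q y))"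
proof (cases "Y = {}")
  case False
  define P Q where "P = (\<Sum>y\<in>Y. p y)" and "Q = (\<Sum>y\<in>Y. q y)"
  have "0 < Q" unfolding Q_def using assms False by (intro sum_pos) auto
  have "0 < P" unfolding P_def using assms False by (intro sum_pos) auto
  have pointwise: "p y * ln (P / Q) - p y * ln (p y / q y) \<le> q y * P / Q - p y" if "y \<in> Y" for y
  proof -
    have "0 < p y" "0 < q y" using that assms by auto
    then have "ln (P / Q) - ln (p y / q y) = ln ((q y * P) / (p y * Q))"
      using \<open>0 < P\<close> \<open>0 < Q\<close> by (simp add: ln_div ln_mult)
    also have "\<dots> \<le> (q y * P) / (p y * Q) - 1"
      using \<open>0 < p y\<close> \<open>0 < q y\<close> \<open>0 < P\<close> \<open>0 < Q\<close> by (intro ln_le_minus_one) simp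
    finally have "p y * (ln (P / Q) - ln (p y / q y)) \<le> p y * ((q y * P) / (p y * Q) - 1)"
      using \<open>0 < p y\<close> by (simp add: mult_left_mono)
    also have "\<dots> = q y * P / Q - p y" using \<open>0 < p y\<close> \<open>0 < Q\<close> by (simp add: field_simps)
    finally show ?thesis by (simp add: algebra_simps)
  qed
  have "(\<Sum>y\<in>Y. p y * ln (P / Q) - p y * ln (p y / q y)) \<le> (\<Sum>y\<in>Y. q y * P / Q - p y)"
    using pointwise by (intro sum_mono) auto
  also have "\<dots> = 0"
    using \<open>0 < Q\<close> by (simp add: sum_subtractf sum_divide_distrib[symmetric]
        sum_distrib_right[symmetric] P_def Q_def)
  finally show ?thesis by (simp add: sum_subtractf sum_distrib_right[symmetric] P_def Q_def)
qed simp

definition binary_KL :: "real \<Rightarrow> real \<Rightarrow> real" where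
  "binary_KL a b = a * ln (a / b) + (1 - a) * ln ((1 - a) / (1 - b))"

lemma has_real_derivative_binary_KL:
  assumes "0 < a" "a < 1" "0 < b" "b < 1"
  shows "(binary_KL a has_real_derivative (b - a) / (b * (1 - b))) (at b)"
proof -
  have "(binary_KL a has_real_derivative (1 - a) / (1 - b) - a / b) (at b)"
    unfolding binary_KL_def[abs_def] using assms
    by (auto intro!: derivative_eq_intros simp: divide_simps)
  moreover have "(1 - a) / (1 - b) - a / b = (b - a) / (b * (1 - b))"
    using assms by (simp add: field_simps)
  ultimately show ?thesis by simp
qed

lemma has_real_derivative_binary_KL_exp:
  assumes "0 < a" "a < 1" "a * exp s < 1"
  shows "((\<lambda>s. binary_KL a (a * exp s)) has_real_derivative
           a * (exp s - 1) / (1 - a * exp s)) (at s)"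
proof -
  have "((\<lambda>s. binary_KL a (a * exp s)) has_real_derivative
          (a * exp s - a) / (a * exp s * (1 - a * exp s)) * (a * exp s)) (at s)"
    using assms by (intro DERIV_chain2[OF has_real_derivative_binary_KL] derivative_eq_intros) auto
  moreover have "(a * exp s - a) / (a * exp s * (1 - a * exp s)) * (a * exp s)
                  = a * (exp s - 1) / (1 - a * exp s)"
    using assms by (simp add: field_simps)
  ultimately show ?thesis by simp
qed

lemma binary_KL_self: "binary_KL a a = 0"
  by (simp add: binary_KL_def)

lemma binary_KL_exp_ge_nonneg:
  assumes a: "0 < a" "a < 1" and t: "0 \<le> t" "a * exp t < 1"
  shows "a * t^2 / 2 \<le> binary_KL a (a * exp t)"
proof (rule deriv_le_imp_le_from_zero[OF t(1)])
  fix s assume s: "0 \<le> s" "s \<le> t"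
  then have "a * exp s < 1" using a t by (smt (verit) exp_le_cancel_iff mult_left_mono)
  then show "((\<lambda>s. binary_KL a (a * exp s)) has_real_derivative
               a * (exp s - 1) / (1 - a * exp s)) (at s)"
    by (rule has_real_derivative_binary_KL_exp[OF a])
  show "((\<lambda>s. a * s^2 / 2) has_real_derivative a * s) (at s)"
    by (auto intro!: derivative_eq_intros)
  have "a * s \<le> a * (exp s - 1)"
    using a exp_ge_add_one_self[of s] by (intro mult_left_mono) linarith+
  also have "\<dots> \<le> a * (exp s - 1) / (1 - a * exp s)"
    using a s \<open>a * exp s < 1\<close> by (simp add: le_divide_eq mult_left_le)
  finally show "a * s \<le> a * (exp s - 1) / (1 - a * exp s)" .
qed (simp add: binary_KL_self)

lemma binary_KL_exp_ge_nonpos: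
  assumes a: "0 < a" "a < 1" and "0 \<le> v"
  shows "a * (v - 1 + exp (-v)) \<le> binary_KL a (a * exp (-v))"
proof (rule deriv_le_imp_le_from_zero[OF \<open>0 \<le> v\<close>])
  fix s :: real assume s: "0 \<le> s"
  have "a * exp (-s) \<le> a" using a s by (simp add: mult_left_le)
  then have lt: "a * exp (-s) < 1" using a by linarith
  have "((\<lambda>s. binary_KL a (a * exp (-s))) has_real_derivative
          a * (exp (-s) - 1) / (1 - a * exp (-s)) * (-1)) (at s)"
    by (rule DERIV_chain2[where g = uminus, OF has_real_derivative_binary_KL_exp[OF a lt]])
      (auto intro!: derivative_eq_intros)
  then show "((\<lambda>s. binary_KL a (a * exp (-s))) has_real_derivative
          a * (1 - exp (-s)) / (1 - a * exp (-s))) (at s)"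
    by (simp add: field_simps)
  show "((\<lambda>s. a * (s - 1 + exp (-s))) has_real_derivative a * (1 - exp (-s))) (at s)"
    by (auto intro!: derivative_eq_intros)
  have "0 \<le> a * (1 - exp (-s))" using a s by simp
  then show "a * (1 - exp (-s)) \<le> a * (1 - exp (-s)) / (1 - a * exp (-s))"
    using a lt by (simp add: le_divide_eq mult_left_le)
qed (simp add: binary_KL_self)

lemma binary_KL_ge_min_sq_ln_ratio:
  assumes a: "0 < a" "a < 1" and b: "0 < b" "b < 1"
  shows "a * min ((ln (b / a))^2) 1 / 3 \<le> binary_KL a b"
proof -
  define t where "t = ln (b / a)"
  have b_eq: "b = a * exp t" unfolding t_def using a b by simp
  show ?thesis
  proof (cases "0 \<le> t")
    case True
    have "a * min (t^2) 1 / 3 \<le> a * t^2 / 3"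
      using a by (intro divide_right_mono mult_left_mono) auto
    also have "\<dots> \<le> a * t^2 / 2" using a by simp
    also have "\<dots> \<le> binary_KL a b"
      using binary_KL_exp_ge_nonneg[OF a True] b b_eq by simp
    finally show ?thesis unfolding t_def .
  next
    case False
    then have "a * (min ((-t)^2) 1 / 3) \<le> a * (-t - 1 + exp (-(-t)))"
      using a by (intro mult_left_mono min_sq_one_le_exp_excess) auto
    also have "\<dots> \<le> binary_KL a b"
      using binary_KL_exp_ge_nonpos[OF a, of "-t"] False b_eq by simp
    finally show ?thesis unfolding t_def by simp
  qed
qed

lemma abs_ln_ratio_le_sqrt:
  assumes a: "0 < a" "a < 1" and b: "0 < b" "b < 1"
    and "binary_KL a b \<le> \<tau>" and "\<tau> < a / 3"
  shows "\<bar>ln (b / a)\<bar> \<le> sqrt (3 * \<tau> / a)"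
proof -
  have "min ((ln (b / a))^2) 1 \<le> 3 * \<tau> / a"
    using binary_KL_ge_min_sq_ln_ratio[OF a b] assms(5) a by (simp add: field_simps)
  moreover have "3 * \<tau> / a < 1" using assms(6) a by (simp add: field_simps)
  ultimately have "(ln (b / a))^2 \<le> 3 * \<tau> / a" by (simp add: min_def split: if_splits)
  then show ?thesis using real_sqrt_le_mono by fastforce
qed

lemma binary_KL_le_KL:
  assumes p: "is_pmf_on X p" and q: "is_pmf_on X q" and "x \<in> X"
  shows "binary_KL (p x) (q x) \<le> KL X p q"
proof -
  let ?Y = "X - {x}"
  have "finite X" "\<forall>y\<in>X. 0 < p y" "\<forall>y\<in>X. 0 < q y" "sum p X = 1" "sum q X = 1"
    using p q unfolding is_pmf_on_def by auto
  then have "sum p ?Y = 1 - p x" "sum q ?Y = 1 - q x"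
    using sum.remove[OF \<open>finite X\<close> \<open>x \<in> X\<close>, of p] sum.remove[OF \<open>finite X\<close> \<open>x \<in> X\<close>, of q]
    by linarith+
  then have "(1 - p x) * ln ((1 - p x) / (1 - q x)) \<le> (\<Sum>y\<in>?Y. p y * ln (p y / q y))"
    using log_sum_inequality[of ?Y p q] \<open>finite X\<close> \<open>\<forall>y\<in>X. 0 < p y\<close> \<open>\<forall>y\<in>X. 0 < q y\<close> by simp
  then show ?thesis
    unfolding KL_def binary_KL_def
    using sum.remove[OF \<open>finite X\<close> \<open>x \<in> X\<close>, of "\<lambda>y. p y * ln (p y / q y)"] by linarith
qed

lemma is_pmf_on_lt_one_iff:
  assumes "is_pmf_on X p" and "x \<in> X"
  shows "p x < 1 \<longleftrightarrow> X \<noteq> {x}"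
proof -
  have "finite X" "\<forall>y\<in>X. 0 < p y" "sum p X = 1"
    using assms(1) unfolding is_pmf_on_def by auto
  then have "sum p (X - {x}) = 1 - p x"
    using sum.remove[OF \<open>finite X\<close> \<open>x \<in> X\<close>, of p] by linarith
  moreover have "X - {x} \<noteq> {} \<Longrightarrow> 0 < sum p (X - {x})"
    using \<open>finite X\<close> \<open>\<forall>y\<in>X. 0 < p y\<close> by (intro sum_pos) auto
  ultimately show ?thesis using \<open>x \<in> X\<close> by (cases "X = {x}") auto
qed

lemma threshold_term_bounds:
  fixes a :: real
  assumes "0 < a" and "0 < a * (1 - a) / (3 * (1 + a)^2)"
  shows "a < 1" and "a * (1 - a) / (3 * (1 + a)^2) < a / 3"
proof -
  show "a < 1" using assms by (simp add: zero_less_divide_iff zero_less_mult_iff)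
  have "1 \<le> (1 + a)^2" using assms(1) by simp
  then have "a * (1 - a) / (3 * (1 + a)^2) \<le> a * (1 - a) / 3"
    using assms(1) \<open>a < 1\<close> by (intro divide_left_mono) auto
  also have "\<dots> < a / 3" using assms(1) by simp
  finally show "a * (1 - a) / (3 * (1 + a)^2) < a / 3" .
qed

theorem lemma1:
  fixes X :: "'a set" and p q r :: "'a \<Rightarrow> real"
    and \<tau> \<gamma>\<^sub>1 \<gamma>\<^sub>2 c\<^sub>1 p\<^sub>m :: real
  assumes "is_pmf_on X p" and "is_pmf_on X q" and "is_pmf_on X r"
    and "c\<^sub>1 = Min ((\<lambda>x. p x * (1 - p x) / (3 * (1 + p x)^2)) ` X)"
    and "p\<^sub>m = Min (p ` X)"
    and "c\<^sub>1 > 0" and "p\<^sub>m > 0"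
    and "KL X p q \<le> \<tau>" and "\<tau> \<le> c\<^sub>1"
    and "\<forall>x\<in>X. \<gamma>\<^sub>1 \<le> p x / r x \<and> p x / r x \<le> \<gamma>\<^sub>2"
  shows "\<forall>x\<in>X. \<gamma>\<^sub>1 * exp (- sqrt (3 * \<tau> / p\<^sub>m)) \<le> q x / r x
               \<and> q x / r x \<le> \<gamma>\<^sub>2 * exp (sqrt (3 * \<tau> / p\<^sub>m))"
proof
  fix x assume "x \<in> X"
  have "finite X" and pos: "0 < p x" "0 < q x" "0 < r x"
    using assms(1-3) \<open>x \<in> X\<close> unfolding is_pmf_on_def by auto
  have "c\<^sub>1 \<le> p x * (1 - p x) / (3 * (1 + p x)^2)" and "p\<^sub>m \<le> p x"
    using assms(4,5) \<open>finite X\<close> \<open>x \<in> X\<close> by auto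
  then have "p x < 1" and "\<tau> < p x / 3"
    using threshold_term_bounds[OF pos(1)] assms(6,9) by fastforce+
  then have "q x < 1"
    using is_pmf_on_lt_one_iff[OF assms(1) \<open>x \<in> X\<close>] is_pmf_on_lt_one_iff[OF assms(2) \<open>x \<in> X\<close>] by simp
  have KL_le: "binary_KL (p x) (q x) \<le> \<tau>"
    using binary_KL_le_KL[OF assms(1,2) \<open>x \<in> X\<close>] assms(8) by linarith
  have "0 \<le> p x * min ((ln (q x / p x))^2) 1 / 3" using pos by simp
  then have "0 \<le> \<tau>"
    using binary_KL_ge_min_sq_ln_ratio[OF pos(1) \<open>p x < 1\<close> pos(2) \<open>q x < 1\<close>] KL_le by linarith
  have "\<bar>ln (q x / p x)\<bar> \<le> sqrt (3 * \<tau> / p x)"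
    by (rule abs_ln_ratio_le_sqrt[OF pos(1) \<open>p x < 1\<close> pos(2) \<open>q x < 1\<close> KL_le \<open>\<tau> < p x / 3\<close>])
  also have "\<dots> \<le> sqrt (3 * \<tau> / p\<^sub>m)"
    using \<open>0 \<le> \<tau>\<close> \<open>p\<^sub>m \<le> p x\<close> assms(7) by (simp add: divide_left_mono)
  finally show "\<gamma>\<^sub>1 * exp (- sqrt (3 * \<tau> / p\<^sub>m)) \<le> q x / r x
               \<and> q x / r x \<le> \<gamma>\<^sub>2 * exp (sqrt (3 * \<tau> / p\<^sub>m))"
    using ratio_bounds_from_abs_ln[OF pos] assms(10) \<open>x \<in> X\<close> by blast
qed

end
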